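(* Let $K\subset\mathbb{R}^{n+m}$ be a curved convex body. Then for every $u\in W\setminus\{0\}$, $$h_{\Sigma_\pi K}(u)=\int_V\langle u,\nabla h_K(u+\xi)\rangle\, J_{\psi_u}(\xi)\,\mathrm{d}\xi,$$ where $\psi_u:V\to V$ is $\psi_u(\xi)=\pi\big(\nabla h_K(u+\xi)\big)$ and $J_{\psi_u}(\xi)$ is the determinant of the differential of $\psi_u$ at $\xi$.
   Context: A convex body is a non-empty compact convex subset of a real vector space; its support function is $h_L(u)=\max\{\langle u,x\rangle:x\in L\}$. A convex body $K\subset\mathbb{R}^{n+m}$ is curved if $h_K$ is $C^2$ (away from $0$) and the restriction of $\nabla h_K$ to the unit sphere $S^{n+m-1}$ is a $C^1$ diffeomorphism onto its image. Let $V\subset\mathbb{R}^{n+m}$ be a linear subspace of dimension $n$, $W=V^\perp$, $\pi$ the orthogonal projection onto $V$. For $x\in\pi(K)$ let $K_x:=\{y\in W:x+y\in K\}$; a section is $\gamma:\pi(K)\to W$ with $\gamma(x)\in K_x$; the fiber body is $\Sigma_\pi K:=\{\int_{\pi(K)}\gamma(x)\,\mathrm{d}x:\gamma\text{ Borel measurable section}\}\subset W$, $\mathrm{d}x$ Lebesgue measure on $V$. *)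

theory Defs
  imports "HOL-Analysis.Analysis"
begin

definition supp_fun :: "'a::real_inner set \<Rightarrow> 'a \<Rightarrow> real" where
  "supp_fun L u = Sup ((\<lambda>x. inner u x) ` L)"

definition convex_body :: "'a::euclidean_space set \<Rightarrow> bool" where
  "convex_body K \<longleftrightarrow> K \<noteq> {} \<and> compact K \<and> convex K"

text \<open>Gradient of a real-valued function (meaningful where it is differentiable).\<close>
definition grad :: "('a::real_inner \<Rightarrow> real) \<Rightarrow> 'a \<Rightarrow> 'a" where
  "grad h x = (SOME g. GDERIV h x :> g)"

definition C1_on :: "'a::euclidean_space set \<Rightarrow> ('a \<Rightarrow> 'b::euclidean_space) \<Rightarrow> bool" where
  "C1_on U F \<longleftrightarrow> (\<exists>F'. (\<forall>x\<in>U. (F has_derivative blinfun_apply (F' x)) (at x)) \<and> continuous_on U F')"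

definition C1_on_set :: "'a::euclidean_space set \<Rightarrow> ('a \<Rightarrow> 'b::euclidean_space) \<Rightarrow> bool" where
  "C1_on_set A f \<longleftrightarrow> (\<forall>x\<in>A. \<exists>U F. open U \<and> x \<in> U \<and> C1_on U F \<and> (\<forall>y\<in>A \<inter> U. F y = f y))"

definition C1_diffeo_onto_image :: "'a::euclidean_space set \<Rightarrow> ('a \<Rightarrow> 'a) \<Rightarrow> bool" where
  "C1_diffeo_onto_image A f \<longleftrightarrow> inj_on f A \<and> C1_on_set A f \<and> C1_on_set (f ` A) (the_inv_into A f)"

definition curved :: "'a::euclidean_space set \<Rightarrow> bool" where
  "curved K \<longleftrightarrow>
     (\<forall>x. x \<noteq> 0 \<longrightarrow> (\<exists>g. GDERIV (supp_fun K) x :> g))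
   \<and> C1_on (- {0}) (grad (supp_fun K))
   \<and> C1_diffeo_onto_image (sphere 0 1) (grad (supp_fun K))"

definition proj :: "'a::euclidean_space set \<Rightarrow> 'a \<Rightarrow> 'a" where
  "proj V x = (THE y. y \<in> V \<and> x - y \<in> orthogonal_comp V)"

text \<open>Lebesgue measure on the subspace V = range f, where f : R^n \<rightarrow> V is a linear isometry
  (orthonormal frame of V); the result does not depend on the chosen frame.\<close>
definition subspace_lebesgue :: "(real^'n \<Rightarrow> 'a::euclidean_space) \<Rightarrow> 'a measure" where
  "subspace_lebesgue f = distr lborel borel f"

text \<open>Determinant of the differential at xi of a map psi : V \<rightarrow> V, computed in the orthonormal
  coordinates given by f.\<close>
definition subspace_jacobian :: "(real^'n \<Rightarrow> 'a::euclidean_space) \<Rightarrow> ('a \<Rightarrow> 'a) \<Rightarrow> 'a \<Rightarrow> real" where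
  "subspace_jacobian f psi xi = det (jacobian (\<lambda>y. inv f (psi (f y))) (at (inv f xi)))"

definition fiber_body :: "(real^'n \<Rightarrow> 'a::euclidean_space) \<Rightarrow> 'a set \<Rightarrow> 'a set" where
  "fiber_body f K =
     (let V = range f; P = proj V ` K in
      {(\<integral>x\<in>P. gamma x \<partial>subspace_lebesgue f) | gamma.
         gamma \<in> borel_measurable (restrict_space borel P) \<and>
         (\<forall>x\<in>P. gamma x \<in> orthogonal_comp V \<and> x + gamma x \<in> K)})"

end

theory Submission
  imports Defs "HOL-Combinatorics.Permutations" "HOL-Library.Countable"
begin

text \<open>The maximum of \<open>\<langle>u, \<cdot>\<rangle>\<close> over the fibre body is attained by the section picking in every
  fibre \<open>K\<^sub>x\<close> its top point in direction \<open>u\<close>, so \<open>h\<^sub>\<Sigma>(u)\<close> is the integral over \<open>\<pi>(K)\<close> of the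
  height \<open>\<langle>u, top(x)\<rangle>\<close> of that point. For \<open>\<xi> \<in> V\<close> the point \<open>\<nabla>h\<^sub>K(u + \<xi>)\<close> maximises
  \<open>\<langle>u + \<xi>, \<cdot>\<rangle>\<close> on \<open>K\<close>, hence \<open>\<langle>u, \<cdot>\<rangle>\<close> on its own fibre: it is the top point over \<open>\<psi>\<^sub>u(\<xi>)\<close>.
  Since \<open>K\<close> is curved, \<open>\<psi>\<^sub>u\<close> is injective, and by a separation argument every interior point of
  \<open>\<pi>(K)\<close> is a value of \<open>\<psi>\<^sub>u\<close>. The formula is then the change of variables \<open>x = \<psi>\<^sub>u(\<xi>)\<close>; its
  Jacobian is nonnegative because \<open>\<nabla>h\<^sub>K\<close> is a monotone map.\<close>

lemma det_nonneg_if_inner_nonneg: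
  fixes M :: "real^'n^'n"
  assumes psd: "\<And>d. inner d (M *v d) \<ge> 0"
  shows "det M \<ge> 0"
proof (rule ccontr)
  assume neg: "\<not> det M \<ge> 0"
  define N where "N t = t *\<^sub>R M + (1 - t) *\<^sub>R (mat 1 :: real^'n^'n)" for t :: real
  have N_apply: "N t *v d = t *\<^sub>R (M *v d) + (1 - t) *\<^sub>R d" for t d
    unfolding N_def by (simp add: matrix_vector_mult_add_rdistrib scaleR_matrix_vector_assoc
        flip: scaleR_matrix_vector_assoc)
  text \<open>For \<open>0 \<le> t < 1\<close> the matrix \<open>N t\<close> is positive definite, hence invertible.\<close>
  have det_N_nonzero: "det (N t) \<noteq> 0" if "0 \<le> t" "t < 1" for t
  proof -
    have "inj ((*v) (N t))"
    proof (rule injI)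
      fix x y assume eq: "N t *v x = N t *v y"
      let ?d = "x - y"
      have "inner ?d (N t *v ?d) = 0" using eq by (simp add: matrix_vector_mult_diff_distrib)
      hence "t * inner ?d (M *v ?d) + (1 - t) * inner ?d ?d = 0"
        by (simp add: N_apply inner_add_right)
      moreover have "t * inner ?d (M *v ?d) \<ge> 0" using psd that by simp
      ultimately have "(1 - t) * inner ?d ?d = 0"
        using that by (smt (verit) inner_ge_zero mult_nonneg_nonneg)
      thus "x = y" using that by simp
    qed
    hence "det (matrix ((*v) (N t))) \<noteq> 0"
      by (subst det_nz_iff_inj) auto
    thus ?thesis by simp
  qed
  have "continuous_on {0..1} (\<lambda>t. det (N t))"
    unfolding N_def det_def by (intro continuous_intros)
  moreover have "det (N 0) = 1" "det (N 1) < 0" using neg by (simp_all add: N_def)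
  ultimately obtain t where "0 \<le> t" "t \<le> 1" "det (N t) = 0"
    using IVT2'[of "\<lambda>t. det (N t)" 1 0 0] by force
  with det_N_nonzero[of t] \<open>det (N 1) < 0\<close> show False by (cases "t = 1") auto
qed

lemma sign_conjugate:
  fixes r :: "'m::finite \<Rightarrow> 'n::finite"
  assumes r: "bij r" and p: "p permutes UNIV"
  shows "sign (inv r \<circ> p \<circ> r) = sign p"
proof -
  have "map_permutation UNIV (inv r) p = inv r \<circ> p \<circ> r"
    using r by (simp add: map_permutation_def restrict_id_def bij_imp_bij_inv bij_is_surj
        inv_inv_eq fun_eq_iff)
  with sign_map_permutation[of "inv r" UNIV p] show ?thesis
    using r p by (simp add: bij_imp_bij_inv bij_is_inj)
qed

lemma det_reindex:
  fixes M :: "'a::comm_ring_1^'n::finite^'n" and r :: "'m::finite \<Rightarrow> 'n"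
  assumes r: "bij r"
  shows "det (\<chi> i j. M $ r i $ r j) = det M"
proof -
  define conj where "conj p = inv r \<circ> p \<circ> r" for p :: "'n \<Rightarrow> 'n"
  have r_inv: "r (inv r x) = x" for x using r by (simp add: bij_is_surj surj_f_inv_f)
  have inv_r: "inv r (r x) = x" for x using r by (simp add: bij_is_inj)
  have bij_conj: "bij_betw conj {p. p permutes (UNIV :: 'n set)} {q. q permutes (UNIV :: 'm set)}"
  proof (rule bij_betw_byWitness[where f' = "\<lambda>q. r \<circ> q \<circ> inv r"])
    show "\<forall>p\<in>{p. p permutes UNIV}. r \<circ> conj p \<circ> inv r = p"
      by (auto simp: conj_def fun_eq_iff r_inv)
    show "\<forall>q\<in>{q. q permutes UNIV}. conj (r \<circ> q \<circ> inv r) = q"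
      by (auto simp: conj_def fun_eq_iff inv_r)
  qed (use r bij_imp_bij_inv[OF r] in \<open>auto simp: conj_def permutes_univ bij_iff[symmetric]
      intro: bij_comp\<close>)
  have prod_conj: "(\<Prod>i\<in>UNIV. M $ r i $ r (conj p i)) = (\<Prod>j\<in>UNIV. M $ j $ p j)" for p
    using prod.reindex_bij_betw[of r UNIV UNIV "\<lambda>j. M $ j $ p j"] r
    by (simp add: conj_def r_inv bij_betw_def)
  have "det (\<chi> i j. M $ r i $ r j) =
      (\<Sum>p | p permutes (UNIV :: 'n set). of_int (sign (conj p)) * (\<Prod>i\<in>UNIV. M $ r i $ r (conj p i)))"
    unfolding det_def vec_lambda_beta by (rule sum.reindex_bij_betw[OF bij_conj, symmetric])
  also have "\<dots> = det M"
    unfolding det_def using prod_conj by (intro sum.cong) (auto simp: conj_def sign_conjugate[OF r])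
  finally show ?thesis .
qed

lemma has_absolute_integral_change_of_variables_scalar:
  fixes g :: "real^'m::{finite,wellorder} \<Rightarrow> real^'m::_" and h :: "real^'m::_ \<Rightarrow> real"
  assumes "\<And>x. (g has_derivative g' x) (at x)" and "inj g"
    and "h absolutely_integrable_on range g"
  shows "(\<lambda>x. \<bar>det (matrix (g' x))\<bar> * h (g x)) absolutely_integrable_on UNIV"
    and "integral UNIV (\<lambda>x. \<bar>det (matrix (g' x))\<bar> * h (g x)) = integral (range g) h"
proof -
  have lin_vec: "bounded_linear (vec :: real \<Rightarrow> real^1)"
    by (rule bounded_linear_intro[where K=1]) (auto simp: vec_add vec_scaleR norm_vec_def L2_set_def)
  have lin_nth: "bounded_linear (\<lambda>v :: real^1. v $ 1)" by (rule bounded_linear_vec_nth)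
  define Psi :: "real^'m::_ \<Rightarrow> real^1" where "Psi = (\<lambda>x. \<bar>det (matrix (g' x))\<bar> *\<^sub>R vec (h (g x)))"
  have "((vec :: real \<Rightarrow> real^1) \<circ> h) absolutely_integrable_on range g"
    by (rule absolutely_integrable_linear[OF assms(3) lin_vec])
  moreover have "integral (range g) ((vec :: real \<Rightarrow> real^1) \<circ> h) = vec (integral (range g) h)"
    by (rule integral_linear[OF _ lin_vec]) (use assms(3) set_lebesgue_integral_eq_integral(1) in blast)
  ultimately have Psi: "Psi absolutely_integrable_on UNIV"
    "integral UNIV Psi = vec (integral (range g) h)"
    using has_absolute_integral_change_of_variables[of UNIV g g' "vec \<circ> h"] assms(1,2)
    by (auto simp: Psi_def has_derivative_at_withinI)
  have scalar: "(\<lambda>x. \<bar>det (matrix (g' x))\<bar> * h (g x)) = (\<lambda>v. v $ 1) \<circ> Psi"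
    by (auto simp: Psi_def)
  show "(\<lambda>x. \<bar>det (matrix (g' x))\<bar> * h (g x)) absolutely_integrable_on UNIV"
    unfolding scalar by (rule absolutely_integrable_linear[OF Psi(1) lin_nth])
  show "integral UNIV (\<lambda>x. \<bar>det (matrix (g' x))\<bar> * h (g x)) = integral (range g) h"
    unfolding scalar
    using integral_linear[OF set_lebesgue_integral_eq_integral(1)[OF Psi(1)] lin_nth] Psi(2) by simp
qed

lemma integral_lborel_eq_integral_UNIV:
  fixes g :: "'a::euclidean_space \<Rightarrow> real"
  assumes "g absolutely_integrable_on UNIV" and "g \<in> borel_measurable borel"
  shows "(\<integral>x. g x \<partial>lborel) = integral UNIV g"
proof -
  have "(LINT x:UNIV|lebesgue. g x) = integral UNIV g"
    by (rule set_lebesgue_integral_eq_integral(2)[OF assms(1)])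
  thus ?thesis using assms(2) by (simp add: set_lebesgue_integral_def integral_completion)
qed

section \<open>Support functions and monotone maps\<close>

lemma supp_fun_upper:
  assumes "compact K" "z \<in> K"
  shows "inner v z \<le> supp_fun K v"
proof -
  have "bounded ((\<lambda>x. inner v x) ` K)"
    using assms(1) by (intro compact_imp_bounded compact_continuous_image continuous_intros)
  thus ?thesis
    unfolding supp_fun_def using assms(2) by (intro cSup_upper bounded_imp_bdd_above) auto
qed

lemma supp_fun_eq_maximum:
  assumes "x \<in> K" "\<And>z. z \<in> K \<Longrightarrow> inner v z \<le> inner v x"
  shows "supp_fun K v = inner v x"
  unfolding supp_fun_def using assms by (intro cSup_eq_maximum) auto

text \<open>The function \<open>w \<mapsto> h\<^sub>K(w) - \<langle>w, x\<rangle>\<close> is nonnegative and vanishes at \<open>v\<close>, so its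
  derivative there is zero.\<close>
lemma gderiv_supp_fun_eq_maximizer:
  assumes K: "compact K" and g: "GDERIV (supp_fun K) v :> g"
    and x: "x \<in> K" "\<And>z. z \<in> K \<Longrightarrow> inner v z \<le> inner v x"
  shows "g = x"
proof -
  let ?\<phi> = "\<lambda>w. supp_fun K w - inner w x"
  have d: "(?\<phi> has_derivative (\<lambda>d. inner d g - inner d x)) (at v)"
    using g unfolding gderiv_def by (auto intro!: derivative_eq_intros)
  have "?\<phi> v = 0" using supp_fun_eq_maximum[OF x] by (simp add: inner_commute)
  moreover have "?\<phi> w \<ge> 0" for w using supp_fun_upper[OF K x(1), of w] by (simp add: inner_commute)
  ultimately have "(\<lambda>d. inner d g - inner d x) = (\<lambda>d. 0)"
    by (intro has_derivative_local_min[OF d]) simp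
  hence "inner (g - x) g - inner (g - x) x = 0" by metis
  thus ?thesis by (simp flip: inner_diff_right)
qed

lemma monotone_has_derivative_inner_nonneg:
  fixes G :: "'a::real_inner \<Rightarrow> 'a"
  assumes mono: "\<And>a b. a \<in> S \<Longrightarrow> b \<in> S \<Longrightarrow> inner (G a - G b) (a - b) \<ge> 0"
    and "open S" "p \<in> S" and G': "(G has_derivative G') (at p)"
  shows "inner w (G' w) \<ge> 0"
proof -
  define \<phi> where "\<phi> t = inner (G (p + t *\<^sub>R w) - G p) w" for t :: real
  have "((\<lambda>t. p + t *\<^sub>R w) has_derivative (\<lambda>t. t *\<^sub>R w)) (at 0)"
    by (auto intro!: derivative_eq_intros)
  hence "((\<lambda>t. G (p + t *\<^sub>R w)) has_derivative (\<lambda>t. G' (t *\<^sub>R w))) (at 0)"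
    using has_derivative_compose[of "\<lambda>t. p + t *\<^sub>R w" _ 0 UNIV G G'] G' by (simp add: o_def)
  hence "(\<phi> has_derivative (\<lambda>t. inner (G' (t *\<^sub>R w)) w)) (at 0)"
    unfolding \<phi>_def by (auto intro!: derivative_eq_intros)
  moreover have "(\<lambda>t. inner (G' (t *\<^sub>R w)) w) = (\<lambda>t. inner w (G' w) * t)"
    using has_derivative_linear[OF G'] by (auto simp: linear_scale inner_commute)
  ultimately have "(\<phi> has_real_derivative inner w (G' w)) (at 0)"
    by (simp add: has_field_derivative_def)
  hence "((\<lambda>t. \<phi> t / t) \<longlongrightarrow> inner w (G' w)) (at_right 0)"
    by (auto simp: has_field_derivative_iff \<phi>_def intro: tendsto_mono[OF at_le])
  moreover have "eventually (\<lambda>t. 0 \<le> \<phi> t / t) (at_right 0)"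
  proof -
    have "((\<lambda>t. p + t *\<^sub>R w) \<longlongrightarrow> p) (at_right 0)"
      by (auto intro!: tendsto_eq_intros)
    hence "eventually (\<lambda>t. p + t *\<^sub>R w \<in> S) (at_right 0)"
      using assms(2,3) by (rule topological_tendstoD)
    moreover have "eventually (\<lambda>t. 0 < t) (at_right (0::real))"
      by (rule eventually_at_right_less)
    ultimately show ?thesis
    proof eventually_elim
      case (elim t)
      have "0 \<le> t * \<phi> t"
        using mono[OF elim(1) assms(3)] by (simp add: \<phi>_def inner_commute)
      thus "0 \<le> \<phi> t / t" using elim(2) by (simp add: zero_le_mult_iff)
    qed
  qed
  ultimately show ?thesis by (rule tendsto_lowerbound) simp
qed

text \<open>A Lagrange multiplier rule, obtained by separating \<open>{(L k, s) | k \<in> K, s \<le> \<langle>u, k\<rangle>}\<close> from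
  the open ray above \<open>(L y, \<langle>u, y\<rangle>)\<close>.\<close>
lemma fiber_maximizer_normal:
  fixes L :: "'a::euclidean_space \<Rightarrow> 'b::euclidean_space"
  assumes K: "convex K" and L: "linear L" and y: "y \<in> K"
    and max: "\<And>k. k \<in> K \<Longrightarrow> L k = L y \<Longrightarrow> inner u k \<le> inner u y"
  shows "\<exists>b c. c \<ge> 0 \<and> (b \<noteq> 0 \<or> c \<noteq> 0) \<and>
    (\<forall>k\<in>K. inner b (L k) + c * inner u k \<le> inner b (L y) + c * inner u y)"
proof -
  define M where "M = inner u y"
  define S where "S = (\<lambda>q. (L (fst q), snd q)) ` {q. fst q \<in> K \<and> snd q \<le> inner u (fst q)}"
  define T where "T = {L y} \<times> {M<..}"
  have hypograph: "convex {q :: 'a \<times> real. fst q \<in> K \<and> snd q \<le> inner u (fst q)}"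
    using K unfolding convex_alt
    by (auto simp: inner_add_right intro!: add_mono mult_left_mono)
  have "linear (\<lambda>q :: 'a \<times> real. (L (fst q), snd q))"
    using L by (intro linearI) (auto simp: linear_add linear_scale)
  hence "convex S" unfolding S_def using hypograph by (rule convex_linear_image)
  moreover have "convex T" by (simp add: T_def convex_Times)
  moreover have "S \<noteq> {}" using y by (force simp: S_def)
  moreover have "T \<noteq> {}" by (simp add: T_def)
  moreover have "S \<inter> T = {}" using max by (force simp: S_def T_def M_def)
  ultimately obtain a \<beta> where "a \<noteq> 0" and aS: "\<forall>q\<in>S. inner a q \<le> \<beta>" and aT: "\<forall>q\<in>T. \<beta> \<le> inner a q"
    using separating_hyperplane_sets by metis
  obtain b c where a: "a = (b, c)" by (cases a)
  have below: "inner b (L k) + c * s \<le> \<beta>" if "k \<in> K" "s \<le> inner u k" for k s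
    using aS that by (auto simp: S_def a)
  have above: "\<beta> \<le> inner b (L y) + c * t" if "t > M" for t
    using aT that by (auto simp: T_def a)
  have "c \<ge> 0"
  proof (rule ccontr)
    assume "\<not> c \<ge> 0"
    define s where "s = min M ((\<beta> - inner b (L y) + 1) / c)"
    have "s \<le> (\<beta> - inner b (L y) + 1) / c" by (simp add: s_def)
    hence "c * s \<ge> \<beta> - inner b (L y) + 1"
      using \<open>\<not> c \<ge> 0\<close> by (simp add: neg_le_divide_eq mult.commute)
    with below[OF y, of s] show False by (simp add: s_def M_def)
  qed
  have top: "\<beta> \<le> inner b (L y) + c * M"
  proof (rule field_le_epsilon)
    fix e :: real assume "e > 0"
    have "c * (e / (c + 1)) \<le> e" using \<open>c \<ge> 0\<close> \<open>e > 0\<close> by (simp add: field_simps)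
    thus "\<beta> \<le> inner b (L y) + c * M + e"
      using above[of "M + e / (c + 1)"] \<open>c \<ge> 0\<close> \<open>e > 0\<close> by (simp add: distrib_left)
  qed
  have "b \<noteq> 0 \<or> c \<noteq> 0" using \<open>a \<noteq> 0\<close> a by (auto simp: zero_prod_def)
  moreover have "inner b (L k) + c * inner u k \<le> inner b (L y) + c * inner u y" if "k \<in> K" for k
    using below[OF that order_refl] top by (simp add: M_def)
  ultimately show ?thesis using \<open>c \<ge> 0\<close> by blast
qed

locale isometric_frame =
  fixes f :: "real^'n \<Rightarrow> 'a::euclidean_space"
  assumes linear_f: "linear f" and norm_f [simp]: "\<And>y. norm (f y) = norm y"
begin

abbreviation coords :: "'a \<Rightarrow> real^'n" where "coords \<equiv> adjoint f"

lemma inner_f_f [simp]: "inner (f x) (f y) = inner x y"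
proof -
  have "inner (f x) (f y) = ((norm (f x + f y))\<^sup>2 - (norm (f x))\<^sup>2 - (norm (f y))\<^sup>2) / 2"
    by (rule dot_norm)
  also have "\<dots> = inner x y"
    by (simp add: dot_norm flip: linear_add[OF linear_f])
  finally show ?thesis .
qed

lemma inner_f_left: "inner (f x) z = inner x (coords z)"
  using adjoint_works[OF linear_f] by simp

lemma linear_coords: "linear coords"
  using linear_f by (rule adjoint_linear)

lemma coords_f [simp]: "coords (f x) = x"
proof -
  have "inner z (coords (f x) - x) = 0" for z
    by (simp add: inner_diff_right flip: inner_f_left)
  from this[of "coords (f x) - x"] show ?thesis by simp
qed

lemma inj_f: "inj f"
  by (metis coords_f injI)

lemma inv_f_f [simp]: "inv f (f y) = y"
  using inj_f by simp

lemma coords_orthogonal_comp: "w \<in> orthogonal_comp (range f) \<Longrightarrow> coords w = 0"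
proof -
  assume "w \<in> orthogonal_comp (range f)"
  hence "inner z (coords w) = 0" for z
    by (auto simp: orthogonal_comp_def orthogonal_def simp flip: inner_f_left)
  from this[of "coords w"] show ?thesis by simp
qed

lemma proj_range: "proj (range f) x = f (coords x)"
  unfolding proj_def
proof (rule the_equality)
  show "f (coords x) \<in> range f \<and> x - f (coords x) \<in> orthogonal_comp (range f)"
    by (auto simp: orthogonal_comp_def orthogonal_def inner_diff_right inner_f_left
        linear_diff[OF linear_coords])
next
  fix y assume y: "y \<in> range f \<and> x - y \<in> orthogonal_comp (range f)"
  then obtain z where "y = f z" by blast
  with coords_orthogonal_comp[of "x - y"] y show "y = f (coords x)"
    by (simp add: linear_diff[OF linear_coords])
qed

lemma norm_coords_le: "norm (coords z) \<le> norm z"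
proof -
  have "(norm (coords z))\<^sup>2 = inner (f (coords z)) z"
    by (simp add: inner_f_left power2_norm_eq_inner)
  also have "\<dots> \<le> norm (coords z) * norm z"
    using norm_cauchy_schwarz[of "f (coords z)" z] by simp
  finally show ?thesis
    by (cases "coords z = 0") (auto simp: power2_eq_square mult_le_cancel_left_pos)
qed

lemma continuous_on_f: "continuous_on S f"
  using linear_f by (simp add: linear_continuous_on linear_conv_bounded_linear)

lemma continuous_on_coords: "continuous_on S coords"
  using linear_coords by (simp add: linear_continuous_on linear_conv_bounded_linear)

lemma closed_range_f: "closed (range f)"
proof -
  have "range f = {x. f (coords x) = x}" by (auto, metis rangeI)
  moreover have "closed {x. f (coords x) = x}"
    by (intro closed_Collect_eq continuous_on_compose2[OF continuous_on_f continuous_on_coords]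
        continuous_intros) auto
  ultimately show ?thesis by simp
qed

lemma measurable_f [measurable]: "f \<in> borel_measurable borel"
  using continuous_on_f by (rule borel_measurable_continuous_onI)

lemma measurable_f_lborel [measurable]: "f \<in> lborel \<rightarrow>\<^sub>M borel"
  by simp

lemma sets_subspace_lebesgue [simp, measurable_cong]: "sets (subspace_lebesgue f) = sets borel"
  by (simp add: subspace_lebesgue_def)

lemma AE_subspace_lebesgue_range: "AE \<xi> in subspace_lebesgue f. \<xi> \<in> range f"
  unfolding subspace_lebesgue_def
proof (subst AE_distr_iff)
  show "{x \<in> space borel. x \<in> range f} \<in> sets borel"
    using closed_range_f by (simp add: borel_closed)
qed simp_all

end

section \<open>A well-ordered copy of a finite index type\<close>

text \<open>The change of variables theorem of the library requires a well-ordered index type.\<close>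

typedef 'a well_ordered = "UNIV :: 'a set" by simp

instance well_ordered :: (finite) finite
  by standard (metis type_definition.univ[OF type_definition_well_ordered] finite_imageI finite)

instantiation well_ordered :: (finite) linorder
begin

definition less_eq_well_ordered :: "'a well_ordered \<Rightarrow> 'a well_ordered \<Rightarrow> bool" where
  "x \<le> y \<longleftrightarrow> to_nat (Rep_well_ordered x) \<le> to_nat (Rep_well_ordered y)"

definition less_well_ordered :: "'a well_ordered \<Rightarrow> 'a well_ordered \<Rightarrow> bool" where
  "x < y \<longleftrightarrow> to_nat (Rep_well_ordered x) < to_nat (Rep_well_ordered y)"

instance
  by standard (auto simp: less_eq_well_ordered_def less_well_ordered_def Rep_well_ordered_inject)

end

instance well_ordered :: (finite) wellorder
proof (rule wf_wellorderI)
  show "wf {(x :: 'a well_ordered, y). x < y}"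
    using wf_inv_image[OF wf_less_than, of "\<lambda>x. to_nat (Rep_well_ordered x)"]
    by (simp add: less_well_ordered_def inv_image_def)
qed intro_classes

lemma bij_Rep_well_ordered: "bij Rep_well_ordered"
  by (metis Abs_well_ordered_inverse Rep_well_ordered_inverse UNIV_I bij_betw_byWitness subset_UNIV)

definition to_well_ordered :: "real^'n::finite \<Rightarrow> real^'n well_ordered" where
  "to_well_ordered x = (\<chi> i. x $ Rep_well_ordered i)"

definition of_well_ordered :: "real^'n::finite well_ordered \<Rightarrow> real^'n" where
  "of_well_ordered z = (\<chi> j. z $ Abs_well_ordered j)"

lemma of_to_well_ordered [simp]: "of_well_ordered (to_well_ordered x) = x"
  by (simp add: of_well_ordered_def to_well_ordered_def Abs_well_ordered_inverse vec_eq_iff)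

lemma to_of_well_ordered [simp]: "to_well_ordered (of_well_ordered z) = z"
  by (simp add: of_well_ordered_def to_well_ordered_def Rep_well_ordered_inverse vec_eq_iff)

lemma linear_to_well_ordered: "linear to_well_ordered"
  by (rule linearI) (auto simp: to_well_ordered_def vec_eq_iff)

lemma linear_of_well_ordered: "linear of_well_ordered"
  by (rule linearI) (auto simp: of_well_ordered_def vec_eq_iff)

lemma norm_of_well_ordered [simp]: "norm (of_well_ordered z) = norm z"
proof -
  have "inner (of_well_ordered z) (of_well_ordered z) = inner z z"
    unfolding inner_vec_def of_well_ordered_def
    using sum.reindex_bij_betw[of Abs_well_ordered UNIV UNIV "\<lambda>i. z $ i * z $ i"]
      bij_Rep_well_ordered
    by (simp add: bij_betw_def type_definition.Abs_image[OF type_definition_well_ordered]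
        inj_on_def Abs_well_ordered_inject)
  thus ?thesis by (simp add: norm_eq_sqrt_inner)
qed

lemma of_well_ordered_axis: "of_well_ordered (axis j (1::real)) = axis (Rep_well_ordered j) 1"
  by (auto simp: of_well_ordered_def axis_def vec_eq_iff Abs_well_ordered_inverse
      Rep_well_ordered_inverse)

lemma matrix_conjugate_well_ordered:
  fixes L :: "real^'n::finite \<Rightarrow> real^'n"
  shows "matrix (\<lambda>d. to_well_ordered (L (of_well_ordered d))) =
    (\<chi> i j. matrix L $ Rep_well_ordered i $ Rep_well_ordered j)"
  by (simp add: matrix_def vec_eq_iff to_well_ordered_def of_well_ordered_axis)

lemma measurable_of_well_ordered [measurable]: "of_well_ordered \<in> borel_measurable borel"
  using linear_of_well_ordered
  by (intro borel_measurable_continuous_onI linear_continuous_on) (simp add: linear_conv_bounded_linear)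

lemma prod_Basis_vec: "(\<Prod>b\<in>(Basis :: (real^'n::finite) set). x \<bullet> b) = (\<Prod>i\<in>UNIV. x $ i)"
proof -
  have Basis: "(Basis :: (real^'n) set) = (\<lambda>i. axis i 1) ` UNIV"
    by (auto simp: Basis_vec_def)
  have "inj (\<lambda>i::'n. axis i (1::real))" by (auto intro: injI simp: axis_eq_axis)
  thus ?thesis unfolding Basis by (simp add: prod.reindex inner_axis)
qed

lemma distr_lborel_of_well_ordered:
  "distr lborel borel (of_well_ordered :: real^('n::finite well_ordered) \<Rightarrow> real^'n) = lborel"
proof (rule lborel_eqI[symmetric])
  fix l u :: "real^'n" assume lu: "\<And>b. b \<in> Basis \<Longrightarrow> l \<bullet> b \<le> u \<bullet> b"
  have "of_well_ordered -` box l u = box (to_well_ordered l) (to_well_ordered u)"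
    by (auto simp: mem_box_cart of_well_ordered_def to_well_ordered_def)
      (metis Rep_well_ordered_inverse, metis Rep_well_ordered_inverse,
       metis Abs_well_ordered_inverse UNIV_I, metis Abs_well_ordered_inverse UNIV_I)
  moreover have "\<forall>b\<in>Basis. to_well_ordered l \<bullet> b \<le> to_well_ordered u \<bullet> b"
    using lu[of "axis _ 1"] by (auto simp: Basis_vec_def inner_axis to_well_ordered_def)
  ultimately have "emeasure (distr lborel borel of_well_ordered) (box l u) =
      (\<Prod>i\<in>UNIV. (u - l) $ Rep_well_ordered i)"
    by (simp add: emeasure_distr emeasure_lborel_box_eq prod_Basis_vec to_well_ordered_def)
  also have "(\<Prod>i\<in>UNIV. (u - l) $ Rep_well_ordered i) = (\<Prod>b\<in>Basis. (u - l) \<bullet> b)"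
    using prod.reindex_bij_betw[of Rep_well_ordered UNIV UNIV "\<lambda>j. (u - l) $ j"] bij_Rep_well_ordered
    by (simp add: prod_Basis_vec)
  finally show "emeasure (distr lborel borel of_well_ordered) (box l u) = (\<Prod>b\<in>Basis. (u - l) \<bullet> b)" .
qed simp

context isometric_frame
begin

lemma isometric_frame_of_well_ordered: "isometric_frame (f \<circ> of_well_ordered)"
  by (rule isometric_frame.intro) (simp_all add: linear_compose[OF linear_of_well_ordered linear_f])

lemma range_comp_of_well_ordered: "range (f \<circ> of_well_ordered) = range f"
proof -
  have "range of_well_ordered = (UNIV :: (real^'n) set)"
    by (rule surjI[of of_well_ordered to_well_ordered]) simp
  thus ?thesis by (metis image_comp)
qed

lemma subspace_lebesgue_of_well_ordered:
  "subspace_lebesgue (f \<circ> of_well_ordered) = subspace_lebesgue f"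
proof -
  have "distr lborel borel (f \<circ> of_well_ordered) = distr (distr lborel borel of_well_ordered) borel f"
    by (rule distr_distr[symmetric]) simp_all
  thus ?thesis unfolding subspace_lebesgue_def distr_lborel_of_well_ordered .
qed

lemma fiber_body_of_well_ordered: "fiber_body (f \<circ> of_well_ordered) K = fiber_body f K"
  unfolding fiber_body_def range_comp_of_well_ordered subspace_lebesgue_of_well_ordered ..

text \<open>Here the differentiability hypothesis is needed because \<open>jacobian\<close> is a junk value
  at points of non-differentiability, which need not be compatible with the reindexing.\<close>
lemma subspace_jacobian_of_well_ordered:
  assumes "\<And>\<xi>. \<psi> \<xi> \<in> range f" and D: "((\<lambda>y. inv f (\<psi> (f y))) has_derivative D) (at y)"
  shows "subspace_jacobian (f \<circ> of_well_ordered) \<psi> (f y) = subspace_jacobian f \<psi> (f y)"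
proof -
  interpret wo: isometric_frame "f \<circ> of_well_ordered" by (rule isometric_frame_of_well_ordered)
  have inv_comp: "inv (f \<circ> of_well_ordered) (f x) = to_well_ordered x" for x
    using wo.inv_f_f[of "to_well_ordered x"] by simp
  define h where "h = (\<lambda>y. inv f (\<psi> (f y)))"
  have conj: "(\<lambda>z. inv (f \<circ> of_well_ordered) (\<psi> ((f \<circ> of_well_ordered) z))) =
      to_well_ordered \<circ> h \<circ> of_well_ordered"
  proof
    fix z
    obtain w where "\<psi> (f (of_well_ordered z)) = f w" using assms(1) by blast
    thus "inv (f \<circ> of_well_ordered) (\<psi> ((f \<circ> of_well_ordered) z)) =
        (to_well_ordered \<circ> h \<circ> of_well_ordered) z"
      by (simp add: h_def inv_comp)
  qed
  have "(of_well_ordered has_derivative of_well_ordered) (at (to_well_ordered y))"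
    by (rule linear_imp_has_derivative[OF linear_of_well_ordered])
  moreover have "(h has_derivative D) (at (of_well_ordered (to_well_ordered y)))"
    using D by (simp add: h_def)
  ultimately have "(to_well_ordered \<circ> h \<circ> of_well_ordered has_derivative
      to_well_ordered \<circ> D \<circ> of_well_ordered) (at (to_well_ordered y))"
    by (intro diff_chain_at linear_imp_has_derivative[OF linear_to_well_ordered])
  hence "jacobian (to_well_ordered \<circ> h \<circ> of_well_ordered) (at (to_well_ordered y)) =
      (\<chi> i j. matrix D $ Rep_well_ordered i $ Rep_well_ordered j)"
    unfolding jacobian_def
    by (simp add: frechet_derivative_at[symmetric] o_def matrix_conjugate_well_ordered)
  moreover have "jacobian h (at y) = matrix D"
    unfolding jacobian_def h_def using frechet_derivative_at[OF D] by simp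
  ultimately show ?thesis
    unfolding subspace_jacobian_def conj inv_comp inv_f_f h_def
    by (simp add: det_reindex[OF bij_Rep_well_ordered])
qed
end

section \<open>The top points of the fibres of a curved body\<close>

locale fiber_setting = isometric_frame f for f :: "real^'n \<Rightarrow> 'a::euclidean_space" +
  fixes K :: "'a set" and u :: 'a
  assumes convex_body_K: "convex_body K" and curved_K: "curved K"
    and u_orthogonal: "u \<in> orthogonal_comp (range f)" and u_nonzero: "u \<noteq> 0"
begin

abbreviation G :: "'a \<Rightarrow> 'a" where "G \<equiv> grad (supp_fun K)"

lemma compact_K: "compact K" and convex_K: "convex K" and K_nonempty: "K \<noteq> {}"
  using convex_body_K by (auto simp: convex_body_def)

lemma inner_u_f [simp]: "inner u (f y) = 0" "inner (f y) u = 0"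
  using u_orthogonal by (auto simp: orthogonal_comp_def orthogonal_def inner_commute)

lemma coords_u [simp]: "coords u = 0"
  using coords_orthogonal_comp u_orthogonal by blast

lemma inner_f_add_scaleR_u: "inner (f b + c *\<^sub>R u) k = inner b (coords k) + c * inner u k"
  by (simp add: inner_add_left inner_f_left)

lemma f_add_scaleR_u_eq_0: "f b + c *\<^sub>R u = 0 \<Longrightarrow> b = 0 \<and> c = 0"
proof -
  assume eq: "f b + c *\<^sub>R u = 0"
  hence "inner u (f b + c *\<^sub>R u) = 0" by simp
  hence "c = 0" using u_nonzero by (simp add: inner_add_right)
  with eq show ?thesis by (metis add_0_right norm_eq_zero norm_f scale_zero_left)
qed

lemma u_add_f_nonzero: "u + f y \<noteq> 0"
  using f_add_scaleR_u_eq_0[of y 1] by (auto simp: add.commute)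

lemma has_gderiv_G: "v \<noteq> 0 \<Longrightarrow> GDERIV (supp_fun K) v :> G v"
  using curved_K unfolding curved_def grad_def by (metis someI_ex)

lemma G_in_K: "v \<noteq> 0 \<Longrightarrow> G v \<in> K"
  and G_maximal: "v \<noteq> 0 \<Longrightarrow> z \<in> K \<Longrightarrow> inner v z \<le> inner v (G v)"
proof -
  assume "v \<noteq> 0"
  have "continuous_on K (inner v)" by (intro continuous_intros)
  then obtain x where x: "x \<in> K" "\<And>z. z \<in> K \<Longrightarrow> inner v z \<le> inner v x"
    using continuous_attains_sup[OF compact_K K_nonempty] by blast
  moreover have "G v = x"
    by (rule gderiv_supp_fun_eq_maximizer[OF compact_K has_gderiv_G[OF \<open>v \<noteq> 0\<close>] x])
  ultimately show "G v \<in> K" "z \<in> K \<Longrightarrow> inner v z \<le> inner v (G v)" by auto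
qed

lemma maximizer_eq_G:
  "v \<noteq> 0 \<Longrightarrow> x \<in> K \<Longrightarrow> (\<And>z. z \<in> K \<Longrightarrow> inner v z \<le> inner v x) \<Longrightarrow> x = G v"
  by (metis gderiv_supp_fun_eq_maximizer[OF compact_K has_gderiv_G])

lemma G_scaleR: assumes "v \<noteq> 0" "c > 0" shows "G (c *\<^sub>R v) = G v"
  using assms by (intro maximizer_eq_G[symmetric]) (auto simp: G_in_K G_maximal)

lemma G_eq_imp_sgn_eq: assumes "a \<noteq> 0" "b \<noteq> 0" "G a = G b" shows "sgn a = sgn b"
proof -
  have "inj_on G (sphere 0 1)"
    using curved_K unfolding curved_def C1_diffeo_onto_image_def by blast
  moreover have "G (sgn v) = G v" if "v \<noteq> 0" for v
    using G_scaleR[OF that, of "1 / norm v"] that by (simp add: sgn_div_norm divide_inverse_commute)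
  ultimately show ?thesis using assms by (auto simp: inj_on_def norm_sgn)
qed

lemma G_monotone: "a \<noteq> 0 \<Longrightarrow> b \<noteq> 0 \<Longrightarrow> inner (G a - G b) (a - b) \<ge> 0"
  using G_maximal[of a "G b"] G_maximal[of b "G a"] G_in_K[of a] G_in_K[of b]
  by (simp add: inner_diff_left inner_diff_right inner_commute)

text \<open>In the coordinates of \<open>V\<close> given by \<open>f\<close>, \<open>shadow\<close> is \<open>\<pi>(K)\<close> and \<open>psi\<close> is \<open>\<psi>\<^sub>u\<close>.\<close>

definition shadow :: "(real^'n) set" where "shadow = coords ` K"

definition is_top_point :: "real^'n \<Rightarrow> 'a \<Rightarrow> bool" where
  "is_top_point x y \<longleftrightarrow> y \<in> K \<and> coords y = x \<and> (\<forall>k\<in>K. coords k = x \<longrightarrow> inner u k \<le> inner u y)"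

definition top_point :: "real^'n \<Rightarrow> 'a" where "top_point x = (THE y. is_top_point x y)"

definition psi :: "real^'n \<Rightarrow> real^'n" where "psi y = coords (G (u + f y))"

lemma is_top_point_normal:
  assumes "is_top_point x y"
  shows "\<exists>b c. c \<ge> 0 \<and> (b \<noteq> 0 \<or> c \<noteq> 0) \<and>
    (\<forall>k\<in>K. inner (f b + c *\<^sub>R u) k \<le> inner (f b + c *\<^sub>R u) y)"
proof -
  from assms have y: "y \<in> K"
    and max: "\<And>k. k \<in> K \<Longrightarrow> coords k = coords y \<Longrightarrow> inner u k \<le> inner u y"
    by (auto simp: is_top_point_def)
  thus ?thesis
    using fiber_maximizer_normal[OF convex_K linear_coords y max] by (simp only: inner_f_add_scaleR_u)
qed

lemma is_top_point_exists: assumes "x \<in> shadow" shows "\<exists>y. is_top_point x y"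
proof -
  have "closed (coords -` {x})"
    by (rule closed_vimage[OF closed_singleton continuous_on_coords])
  hence "compact (K \<inter> coords -` {x})" using compact_K by (intro compact_Int_closed)
  moreover have "K \<inter> coords -` {x} \<noteq> {}" using assms by (auto simp: shadow_def)
  moreover have "continuous_on (K \<inter> coords -` {x}) (inner u)" by (intro continuous_intros)
  ultimately obtain y where "y \<in> K \<inter> coords -` {x}" "\<forall>z\<in>K \<inter> coords -` {x}. inner u z \<le> inner u y"
    using continuous_attains_sup by blast
  thus ?thesis by (auto simp: is_top_point_def)
qed

text \<open>Two top points of the same fibre lie on a common supporting hyperplane; since \<open>h\<^sub>K\<close> is
  differentiable, \<open>K\<close> meets that hyperplane in a single point.\<close>
lemma is_top_point_unique: assumes "is_top_point x y1" "is_top_point x y2" shows "y1 = y2"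
proof -
  obtain b c where c: "c \<ge> 0" "b \<noteq> 0 \<or> c \<noteq> 0"
    and normal: "\<And>k. k \<in> K \<Longrightarrow> inner (f b + c *\<^sub>R u) k \<le> inner (f b + c *\<^sub>R u) y1"
    using is_top_point_normal[OF assms(1)] by blast
  let ?n = "f b + c *\<^sub>R u"
  have n: "?n \<noteq> 0" using f_add_scaleR_u_eq_0[of b c] c by auto
  have y: "y1 \<in> K" "y2 \<in> K" "coords y1 = x" "coords y2 = x"
    using assms by (auto simp: is_top_point_def)
  have "inner u y2 \<le> inner u y1" "inner u y1 \<le> inner u y2"
    using assms y unfolding is_top_point_def by blast+
  with y have "inner ?n y2 = inner ?n y1" by (simp add: inner_f_add_scaleR_u)
  with normal have "y2 = G ?n" by (intro maximizer_eq_G[OF n \<open>y2 \<in> K\<close>]) simp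
  moreover have "y1 = G ?n" by (rule maximizer_eq_G[OF n \<open>y1 \<in> K\<close> normal])
  ultimately show ?thesis by simp
qed

lemma top_point_eqI: assumes "is_top_point x y" shows "top_point x = y"
  unfolding top_point_def using assms by (rule the_equality) (rule is_top_point_unique[OF _ assms])

lemma is_top_point_top_point: assumes "x \<in> shadow" shows "is_top_point x (top_point x)"
proof -
  obtain y where "is_top_point x y" using is_top_point_exists[OF assms] by blast
  thus ?thesis by (simp add: top_point_eqI)
qed

lemma is_top_point_psi: "is_top_point (psi y) (G (u + f y))"
  unfolding is_top_point_def psi_def
proof (intro conjI ballI impI refl)
  show "G (u + f y) \<in> K" by (rule G_in_K[OF u_add_f_nonzero])
  fix k assume "k \<in> K" "coords k = coords (G (u + f y))"
  thus "inner u k \<le> inner u (G (u + f y))"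
    using G_maximal[OF u_add_f_nonzero[of y], of k] by (simp add: inner_add_left inner_f_left)
qed

lemma psi_in_shadow: "psi y \<in> shadow"
  using G_in_K[OF u_add_f_nonzero] unfolding shadow_def psi_def by blast

lemma top_point_psi: "top_point (psi y) = G (u + f y)"
  by (rule top_point_eqI[OF is_top_point_psi])

lemma inj_psi: "inj psi"
proof (rule injI)
  fix y1 y2 assume "psi y1 = psi y2"
  hence "G (u + f y1) = G (u + f y2)" by (metis top_point_psi)
  hence sgn: "sgn (u + f y1) = sgn (u + f y2)" using G_eq_imp_sgn_eq u_add_f_nonzero by blast
  have inner_u_sgn: "inner u (sgn (u + f y)) = inner u u / norm (u + f y)" for y
    by (simp add: sgn_div_norm inner_add_right field_simps)
  have "inner u u / norm (u + f y1) = inner u u / norm (u + f y2)"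
    by (simp only: sgn flip: inner_u_sgn)
  hence "norm (u + f y1) = norm (u + f y2)" using u_nonzero by (simp add: field_simps)
  hence "norm (u + f y1) *\<^sub>R sgn (u + f y1) = norm (u + f y2) *\<^sub>R sgn (u + f y2)"
    by (simp only: sgn)
  moreover have "norm v *\<^sub>R sgn v = v" for v :: 'a
    by (cases "v = 0") (simp_all add: sgn_div_norm)
  ultimately have "u + f y1 = u + f y2" by simp
  thus "y1 = y2" using inj_f by (simp add: inj_eq)
qed

text \<open>At an interior point of the shadow the normal \<open>f b + c u\<close> of the top point cannot be
  horizontal (\<open>c = 0\<close>), since \<open>b\<close> would then be an outer normal of the shadow at an interior
  point. Rescaling to \<open>c = 1\<close> exhibits the top point as a value of \<open>G (u + f \<cdot>)\<close>.\<close>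
lemma interior_shadow_subset_range_psi: "interior shadow \<subseteq> range psi"
proof
  fix x assume x: "x \<in> interior shadow"
  hence F: "is_top_point x (top_point x)" using is_top_point_top_point interior_subset by blast
  obtain b c where c: "c \<ge> 0" "b \<noteq> 0 \<or> c \<noteq> 0"
    and normal: "\<And>k. k \<in> K \<Longrightarrow> inner (f b + c *\<^sub>R u) k \<le> inner (f b + c *\<^sub>R u) (top_point x)"
    using is_top_point_normal[OF F] by blast
  have top_K: "top_point x \<in> K" and coords_top: "coords (top_point x) = x" using F by (auto simp: is_top_point_def)
  have "c > 0"
  proof (rule ccontr)
    assume "\<not> c > 0"
    with c have "c = 0" "b \<noteq> 0" by auto
    have b_normal: "inner b z \<le> inner b x" if "z \<in> shadow" for z
      using that normal \<open>c = 0\<close> coords_top by (auto simp: shadow_def inner_f_left)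
    obtain e where e: "e > 0" "ball x e \<subseteq> shadow" using x by (meson mem_interior)
    let ?z = "x + (e / (2 * norm b)) *\<^sub>R b"
    have "?z \<in> shadow" using e \<open>b \<noteq> 0\<close> by (intro subsetD[OF e(2)]) (simp add: dist_norm)
    moreover have "inner b ?z = inner b x + e / (2 * norm b) * (norm b)\<^sup>2"
      by (simp add: inner_add_right power2_norm_eq_inner)
    moreover have "e / (2 * norm b) * (norm b)\<^sup>2 > 0" using e \<open>b \<noteq> 0\<close> by simp
    ultimately show False using b_normal by fastforce
  qed
  have "inner (u + f (b /\<^sub>R c)) k \<le> inner (u + f (b /\<^sub>R c)) (top_point x)" if "k \<in> K" for k
  proof -
    have "u + f (b /\<^sub>R c) = (1 / c) *\<^sub>R (f b + c *\<^sub>R u)"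
      using \<open>c > 0\<close> by (simp add: linear_scale[OF linear_f] scaleR_add_right divide_inverse_commute)
    thus ?thesis using normal[OF that] \<open>c > 0\<close> by (simp add: divide_right_mono)
  qed
  hence "top_point x = G (u + f (b /\<^sub>R c))" by (rule maximizer_eq_G[OF u_add_f_nonzero top_K])
  hence "psi (b /\<^sub>R c) = x" using coords_top by (simp add: psi_def)
  thus "x \<in> range psi" by blast
qed

lemma compact_shadow: "compact shadow"
  unfolding shadow_def by (intro compact_continuous_image continuous_on_coords compact_K)

lemma convex_shadow: "convex shadow"
  unfolding shadow_def by (intro convex_linear_image linear_coords convex_K)

lemma negligible_shadow_diff_range_psi: "negligible (shadow - range psi)"
proof (rule negligible_subset[OF negligible_convex_frontier[OF convex_shadow]])
  show "shadow - range psi \<subseteq> frontier shadow"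
    using interior_shadow_subset_range_psi compact_shadow
    by (auto simp: frontier_def compact_imp_closed)
qed

text \<open>Triples \<open>(x, y, n)\<close> where \<open>y\<close> is a point of \<open>K\<close> over \<open>x\<close> with unit outer normal \<open>n\<close> in
  \<open>range f \<oplus> \<real>u\<close> and \<open>\<langle>n, u\<rangle> \<ge> 0\<close>. This set is compact, and it projects onto the graph of
  \<open>top_point\<close>; hence \<open>top_point\<close> has a closed graph.\<close>
definition top_normals :: "((real^'n) \<times> 'a \<times> 'a) set" where
  "top_normals = {(x, y, n). y \<in> K \<and> coords y = x \<and> norm n = 1 \<and> inner n u \<ge> 0 \<and>
     n = f (coords n) + (inner n u / inner u u) *\<^sub>R u \<and> (\<forall>z\<in>K. inner n z \<le> inner n y)}"

lemma compact_top_normals: "compact top_normals"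
proof -
  let ?x = "\<lambda>p :: (real^'n) \<times> 'a \<times> 'a. fst p" and ?y = "\<lambda>p. fst (snd p)" and ?n = "\<lambda>p. snd (snd p)"
  have eq: "top_normals = {p. ?y p \<in> K} \<inter> {p. coords (?y p) = ?x p} \<inter>
      {p. norm (?n p) = 1 \<and> inner (?n p) u \<ge> 0 \<and>
        ?n p = f (coords (?n p)) + (inner (?n p) u / inner u u) *\<^sub>R u} \<inter>
      {p. \<forall>z. z \<in> K \<longrightarrow> inner (?n p) z \<le> inner (?n p) (?y p)}"
    by (auto simp: top_normals_def)
  have "continuous_on UNIV ?y" by (intro continuous_intros)
  hence "closed {p. ?y p \<in> K}"
    using closed_vimage[OF compact_imp_closed[OF compact_K]] by (simp add: vimage_def)
  moreover have "closed {p. coords (?y p) = ?x p}"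
    by (intro closed_Collect_eq continuous_on_compose2[OF continuous_on_coords] continuous_intros) auto
  moreover have "closed {p. norm (?n p) = 1 \<and> inner (?n p) u \<ge> 0 \<and>
      ?n p = f (coords (?n p)) + (inner (?n p) u / inner u u) *\<^sub>R u}"
    using u_nonzero
    by (intro closed_Collect_conj closed_Collect_eq closed_Collect_le continuous_intros
        continuous_on_compose2[OF continuous_on_coords] continuous_on_compose2[OF continuous_on_f]) auto
  moreover have "closed {p. \<forall>z. z \<in> K \<longrightarrow> inner (?n p) z \<le> inner (?n p) (?y p)}"
    by (intro closed_Collect_all closed_Collect_imp closed_Collect_le continuous_intros) auto
  ultimately have "closed top_normals" unfolding eq by (intro closed_Int)
  moreover have "top_normals \<subseteq> shadow \<times> K \<times> cball 0 1"
    by (auto simp: top_normals_def shadow_def)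
  ultimately show ?thesis
    using compact_Times[OF compact_shadow compact_Times[OF compact_K compact_cball]]
    by (metis compact_Int_closed inf.absorb_iff2)
qed

lemma top_normals_imp_is_top_point: assumes "(x, y, n) \<in> top_normals" shows "is_top_point x y"
proof -
  define b c where "b = coords n" and "c = inner n u / inner u u"
  have y: "y \<in> K" "coords y = x" and "n \<noteq> 0" and c: "c \<ge> 0" and n: "n = f b + c *\<^sub>R u"
    and normal: "\<And>z. z \<in> K \<Longrightarrow> inner n z \<le> inner n y"
    using assms u_nonzero by (auto simp: top_normals_def b_def c_def)
  have "inner u k \<le> inner u y" if k: "k \<in> K" "coords k = x" for k
  proof (cases "c = 0")
    case False
    thus ?thesis using normal[OF k(1)] c k y by (simp add: n inner_f_add_scaleR_u)
  next
    case True
    hence "inner n k = inner n y" using k y by (simp add: n inner_f_left)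
    hence "k = G n" using normal by (intro maximizer_eq_G[OF \<open>n \<noteq> 0\<close> k(1)]) auto
    moreover have "y = G n" by (rule maximizer_eq_G[OF \<open>n \<noteq> 0\<close> y(1) normal])
    ultimately show ?thesis by simp
  qed
  thus ?thesis using y by (simp add: is_top_point_def)
qed

lemma top_point_in_top_normals:
  assumes "x \<in> shadow" obtains n where "(x, top_point x, n) \<in> top_normals"
proof -
  have F: "is_top_point x (top_point x)" by (rule is_top_point_top_point[OF assms])
  obtain b c where c: "c \<ge> 0" "b \<noteq> 0 \<or> c \<noteq> 0"
    and normal: "\<And>k. k \<in> K \<Longrightarrow> inner (f b + c *\<^sub>R u) k \<le> inner (f b + c *\<^sub>R u) (top_point x)"
    using is_top_point_normal[OF F] by blast
  define m where "m = f b + c *\<^sub>R u"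
  have "m \<noteq> 0" using f_add_scaleR_u_eq_0 c by (auto simp: m_def)
  have coords_m: "coords m = b" by (simp add: m_def linear_add[OF linear_coords]
      linear_scale[OF linear_coords])
  have u_m: "inner m u = c * inner u u" by (simp add: m_def inner_add_left)
  have "(x, top_point x, sgn m) \<in> top_normals"
    unfolding top_normals_def
  proof (clarify, intro conjI ballI)
    show "top_point x \<in> K" "coords (top_point x) = x" using F by (auto simp: is_top_point_def)
    show "norm (sgn m) = 1" using \<open>m \<noteq> 0\<close> by (simp add: norm_sgn)
    show "inner (sgn m) u \<ge> 0" using c u_m by (simp add: sgn_div_norm)
    have "coords (sgn m) = b /\<^sub>R norm m" "inner (sgn m) u / inner u u = c / norm m"
      using u_nonzero by (simp_all add: sgn_div_norm linear_scale[OF linear_coords] coords_m u_m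
          divide_inverse_commute)
    thus "sgn m = f (coords (sgn m)) + (inner (sgn m) u / inner u u) *\<^sub>R u"
      by (simp add: sgn_div_norm linear_scale[OF linear_f] scaleR_add_right divide_inverse_commute
          m_def)
    show "inner (sgn m) z \<le> inner (sgn m) (top_point x)" if "z \<in> K" for z
      using normal[OF that] by (simp add: sgn_div_norm m_def mult_left_mono)
  qed
  thus ?thesis by (rule that)
qed

lemma continuous_on_top_point: "continuous_on shadow top_point"
proof (rule continuous_from_closed_graph[OF compact_K])
  show "top_point \<in> shadow \<rightarrow> K" using is_top_point_top_point by (auto simp: is_top_point_def)
  have "(\<lambda>x. (x, top_point x)) ` shadow = (\<lambda>(x, y, n). (x, y)) ` top_normals"
  proof (intro equalityI subsetI)
    fix q assume "q \<in> (\<lambda>x. (x, top_point x)) ` shadow"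
    then obtain x n where "q = (x, top_point x)" "(x, top_point x, n) \<in> top_normals"
      using top_point_in_top_normals by blast
    thus "q \<in> (\<lambda>(x, y, n). (x, y)) ` top_normals" by force
  next
    fix q assume "q \<in> (\<lambda>(x, y, n). (x, y)) ` top_normals"
    then obtain x y n where q: "q = (x, y)" and T: "(x, y, n) \<in> top_normals" by auto
    from T have "is_top_point x y" by (rule top_normals_imp_is_top_point)
    moreover from this have "x \<in> shadow" by (force simp: is_top_point_def shadow_def)
    ultimately show "q \<in> (\<lambda>x. (x, top_point x)) ` shadow" using q top_point_eqI by blast
  qed
  moreover have "compact ((\<lambda>(x, y, n). (x, y)) ` top_normals)"
    unfolding case_prod_unfold
    by (intro compact_continuous_image compact_top_normals continuous_intros)
  ultimately show "closed ((\<lambda>x. (x, top_point x)) ` shadow)" by (simp add: compact_imp_closed)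
qed

definition DG :: "'a \<Rightarrow> 'a \<Rightarrow>\<^sub>L 'a" where
  "DG = (SOME F'. (\<forall>x\<in>-{0}. (G has_derivative blinfun_apply (F' x)) (at x)) \<and> continuous_on (-{0}) F')"

lemma has_derivative_G: "x \<noteq> 0 \<Longrightarrow> (G has_derivative blinfun_apply (DG x)) (at x)"
  and continuous_on_DG: "continuous_on (-{0}) DG"
proof -
  have "\<exists>F'. (\<forall>x\<in>-{0}. (G has_derivative blinfun_apply (F' x)) (at x)) \<and> continuous_on (-{0}) F'"
    using curved_K unfolding curved_def C1_on_def by blast
  hence "(\<forall>x\<in>-{0}. (G has_derivative blinfun_apply (DG x)) (at x)) \<and> continuous_on (-{0}) DG"
    unfolding DG_def by (rule someI_ex)
  thus "x \<noteq> 0 \<Longrightarrow> (G has_derivative blinfun_apply (DG x)) (at x)" "continuous_on (-{0}) DG"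
    by auto
qed

lemma continuous_on_G: "continuous_on (-{0}) G"
  using has_derivative_G has_derivative_continuous by (force intro: continuous_at_imp_continuous_on)

lemma DG_inner_nonneg: "p \<noteq> 0 \<Longrightarrow> inner w (DG p w) \<ge> 0"
  by (rule monotone_has_derivative_inner_nonneg[of "-{0}" G p]) (auto simp: G_monotone has_derivative_G)

definition psi' :: "real^'n \<Rightarrow> real^'n \<Rightarrow> real^'n" where
  "psi' y d = coords (DG (u + f y) (f d))"

lemma has_derivative_psi: "(psi has_derivative psi' y) (at y)"
proof -
  have "((\<lambda>y. u + f y) has_derivative f) (at y)"
    using linear_imp_has_derivative[OF linear_f] by (auto intro!: derivative_eq_intros)
  hence "((\<lambda>y. G (u + f y)) has_derivative (\<lambda>d. DG (u + f y) (f d))) (at y)"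
    using has_derivative_compose[of "\<lambda>y. u + f y" f y UNIV G] has_derivative_G[OF u_add_f_nonzero]
    by (simp add: o_def)
  from has_derivative_compose[OF this linear_imp_has_derivative[OF linear_coords]]
  show ?thesis by (simp add: o_def psi_def[abs_def] psi'_def[abs_def])
qed

lemma det_psi'_nonneg: "det (matrix (psi' y)) \<ge> 0"
proof (rule det_nonneg_if_inner_nonneg)
  fix d
  have "matrix (psi' y) *v d = psi' y d"
    using has_derivative_linear[OF has_derivative_psi] by (simp add: matrix_works)
  thus "inner d (matrix (psi' y) *v d) \<ge> 0"
    using DG_inner_nonneg[OF u_add_f_nonzero] by (simp add: psi'_def flip: inner_f_left)
qed

lemma continuous_on_det_psi': "continuous_on UNIV (\<lambda>y. det (matrix (psi' y)))"
proof -
  have "continuous_on UNIV (\<lambda>y. DG (u + f y))"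
    by (rule continuous_on_compose2[OF continuous_on_DG])
      (use u_add_f_nonzero in \<open>auto intro: continuous_on_add continuous_on_f\<close>)
  hence entries: "continuous_on UNIV (\<lambda>y. psi' y (axis j 1) $ i)" for i j
    unfolding psi'_def by (intro continuous_intros continuous_on_compose2[OF continuous_on_coords]) auto
  show ?thesis unfolding det_def matrix_def by simp (intro continuous_intros entries)
qed

lemma inv_proj_G_eq_psi: "(\<lambda>y. inv f (proj (range f) (G (u + f y)))) = psi"
  by (auto simp: proj_range psi_def)

lemma subspace_jacobian_psi:
  "subspace_jacobian f (\<lambda>\<xi>. proj (range f) (G (u + \<xi>))) \<xi> = det (matrix (psi' (inv f \<xi>)))"
  unfolding subspace_jacobian_def jacobian_def inv_proj_G_eq_psi
  using frechet_derivative_at[OF has_derivative_psi] by simp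

section \<open>Integrals over the shadow\<close>

definition proj_K :: "'a set" where "proj_K = proj (range f) ` K"

definition top_section :: "'a \<Rightarrow> 'a" where "top_section x = top_point (coords x) - x"

definition height :: "real^'n \<Rightarrow> real" where "height y = inner u (top_point y)"

definition admissible :: "('a \<Rightarrow> 'a) \<Rightarrow> bool" where
  "admissible \<gamma> \<longleftrightarrow> \<gamma> \<in> borel_measurable (restrict_space borel proj_K) \<and>
     (\<forall>x\<in>proj_K. \<gamma> x \<in> orthogonal_comp (range f) \<and> x + \<gamma> x \<in> K)"

lemma fiber_body_eq: "fiber_body f K = {(LINT x:proj_K|subspace_lebesgue f. \<gamma> x) | \<gamma>. admissible \<gamma>}"
  unfolding fiber_body_def Let_def admissible_def proj_K_def by simp

lemma proj_K_eq: "proj_K = f ` shadow"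
  unfolding proj_K_def shadow_def proj_range by (simp add: image_image)

lemma f_in_proj_K_iff: "f y \<in> proj_K \<longleftrightarrow> y \<in> shadow"
  unfolding proj_K_eq using inj_f by (auto simp: inj_image_mem_iff)

lemma proj_K_coords: "x \<in> proj_K \<Longrightarrow> f (coords x) = x \<and> coords x \<in> shadow"
  unfolding proj_K_eq by auto

lemma compact_proj_K: "compact proj_K"
  unfolding proj_K_eq by (intro compact_continuous_image continuous_on_f compact_shadow)

lemma sets_proj_K [measurable]: "proj_K \<in> sets borel"
  by (simp add: borel_closed compact_imp_closed compact_proj_K)

lemma emeasure_proj_K_finite: "emeasure (subspace_lebesgue f) proj_K < \<infinity>"
proof -
  have "f -` proj_K = shadow" using f_in_proj_K_iff by auto
  thus ?thesis unfolding subspace_lebesgue_def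
    using emeasure_compact_finite[OF compact_shadow] by (simp add: emeasure_distr)
qed

lemma admissible_integrable:
  assumes "admissible \<gamma>" shows "set_integrable (subspace_lebesgue f) proj_K \<gamma>"
proof -
  obtain B where B: "\<And>k. k \<in> K \<Longrightarrow> norm k \<le> B"
    using compact_imp_bounded[OF compact_K] bounded_iff by blast
  have "norm (\<gamma> x) \<le> 2 * B" if x: "x \<in> proj_K" for x
  proof -
    have "x + \<gamma> x \<in> K" using assms x by (auto simp: admissible_def)
    moreover obtain k where "k \<in> K" "x = f (coords k)"
      using x unfolding proj_K_def proj_range by blast
    ultimately have "norm (x + \<gamma> x) \<le> B" "norm x \<le> B"
      using B norm_coords_le[of k] by fastforce+
    thus ?thesis using norm_triangle_ineq4[of "x + \<gamma> x" x] by simp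
  qed
  moreover have "(\<lambda>x. indicator proj_K x *\<^sub>R \<gamma> x) \<in> borel_measurable borel"
    using assms unfolding admissible_def by (subst borel_measurable_restrict_space_iff[symmetric]) auto
  ultimately show ?thesis
    unfolding set_integrable_def
    by (intro integrableI_bounded_set[where A=proj_K and B="2*B"] emeasure_proj_K_finite) auto
qed

lemma continuous_on_top_section: "continuous_on proj_K top_section"
  unfolding top_section_def
  by (intro continuous_intros continuous_on_compose2[OF continuous_on_top_point continuous_on_coords])
    (use proj_K_coords in blast)

lemma admissible_top_section: "admissible top_section"
  unfolding admissible_def
proof (intro conjI ballI)
  show "top_section \<in> borel_measurable (restrict_space borel proj_K)"
    by (rule borel_measurable_continuous_on_restrict[OF continuous_on_top_section])
  fix x assume "x \<in> proj_K"
  hence "is_top_point (coords x) (top_point (coords x))" using is_top_point_top_point proj_K_coords by blast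
  hence "coords (top_point (coords x)) = coords x" "top_point (coords x) \<in> K"
    by (auto simp: is_top_point_def)
  thus "x + top_section x \<in> K" "top_section x \<in> orthogonal_comp (range f)"
    by (auto simp: top_section_def orthogonal_comp_def orthogonal_def inner_diff_right inner_f_left
        linear_diff[OF linear_coords])
qed

lemma admissible_le_top_section:
  assumes "admissible \<gamma>" "x \<in> proj_K" shows "inner u (\<gamma> x) \<le> inner u (top_section x)"
proof -
  have "x + \<gamma> x \<in> K" "coords (x + \<gamma> x) = coords x"
    using assms coords_orthogonal_comp by (auto simp: admissible_def linear_add[OF linear_coords])
  moreover have "is_top_point (coords x) (top_point (coords x))"
    using is_top_point_top_point proj_K_coords assms(2) by blast
  ultimately have "inner u (x + \<gamma> x) \<le> inner u (top_point (coords x))"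
    by (auto simp: is_top_point_def)
  moreover have "inner u x = 0" using proj_K_coords[OF assms(2)] inner_u_f by metis
  ultimately show ?thesis by (simp add: top_section_def inner_add_right inner_diff_right)
qed

lemma supp_fun_fiber_body_eq_set_integral:
  "supp_fun (fiber_body f K) u = (LINT x:proj_K|subspace_lebesgue f. inner u (top_section x))"
proof -
  have inner_integral: "inner u (LINT x:proj_K|subspace_lebesgue f. \<gamma> x) =
      (LINT x:proj_K|subspace_lebesgue f. inner u (\<gamma> x))"
    and integrable: "set_integrable (subspace_lebesgue f) proj_K (\<lambda>x. inner u (\<gamma> x))"
    if "admissible \<gamma>" for \<gamma>
  proof -
    have int: "integrable (subspace_lebesgue f) (\<lambda>x. indicator proj_K x *\<^sub>R \<gamma> x)"
      using admissible_integrable[OF that] by (simp add: set_integrable_def)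
    from integrable_inner_right[OF int, of u]
    show "set_integrable (subspace_lebesgue f) proj_K (\<lambda>x. inner u (\<gamma> x))"
      by (simp add: set_integrable_def)
    from integral_inner_right[OF int, of u]
    show "inner u (LINT x:proj_K|subspace_lebesgue f. \<gamma> x) =
        (LINT x:proj_K|subspace_lebesgue f. inner u (\<gamma> x))"
      by (simp add: set_lebesgue_integral_def)
  qed
  show ?thesis
    unfolding supp_fun_def fiber_body_eq
  proof (rule cSup_eq_maximum)
    show "(LINT x:proj_K|subspace_lebesgue f. inner u (top_section x)) \<in>
        inner u ` {(LINT x:proj_K|subspace_lebesgue f. \<gamma> x) | \<gamma>. admissible \<gamma>}"
      unfolding inner_integral[OF admissible_top_section, symmetric]
      using admissible_top_section by (intro imageI) blast
  next
    fix z assume "z \<in> inner u ` {(LINT x:proj_K|subspace_lebesgue f. \<gamma> x) | \<gamma>. admissible \<gamma>}"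
    then obtain \<gamma> where "admissible \<gamma>" and z: "z = inner u (LINT x:proj_K|subspace_lebesgue f. \<gamma> x)"
      by blast
    thus "z \<le> (LINT x:proj_K|subspace_lebesgue f. inner u (top_section x))"
      unfolding z inner_integral[OF \<open>admissible \<gamma>\<close>]
      by (intro set_integral_mono integrable admissible_le_top_section admissible_top_section)
  qed
qed

lemma continuous_on_height: "continuous_on shadow height"
  unfolding height_def by (intro continuous_intros continuous_on_top_point)

lemma set_integrable_height: "set_integrable lborel shadow height"
  unfolding set_integrable_def
  by (rule borel_integrable_compact[OF compact_shadow continuous_on_height])

lemma supp_fun_fiber_body_eq_integral_height:
  "supp_fun (fiber_body f K) u = integral shadow height"
proof -
  have "continuous_on proj_K (\<lambda>x. inner u (top_section x))"
    by (intro continuous_on_inner continuous_on_const continuous_on_top_section)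
  hence "(\<lambda>x. indicator proj_K x *\<^sub>R inner u (top_section x)) \<in> borel_measurable borel"
    by (rule borel_measurable_continuous_on_indicator[OF sets_proj_K])
  hence "(LINT x:proj_K|subspace_lebesgue f. inner u (top_section x)) =
      (\<integral>y. indicator proj_K (f y) *\<^sub>R inner u (top_section (f y)) \<partial>lborel)"
    unfolding set_lebesgue_integral_def subspace_lebesgue_def
    by (intro integral_distr measurable_f_lborel)
  also have "\<dots> = (LINT y:shadow|lborel. height y)"
    unfolding set_lebesgue_integral_def
    by (intro Bochner_Integration.integral_cong refl)
      (simp add: f_in_proj_K_iff top_section_def height_def inner_diff_right split: split_indicator)
  also have "\<dots> = integral shadow height"
    by (rule set_borel_integral_eq_integral(2)[OF set_integrable_height])
  finally show ?thesis by (simp add: supp_fun_fiber_body_eq_set_integral)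
qed

lemma height_absolutely_integrable_on_range_psi: "height absolutely_integrable_on range psi"
  and integral_range_psi_height: "integral (range psi) height = integral shadow height"
proof -
  have "(\<lambda>x. indicator shadow x *\<^sub>R height x) \<in> borel_measurable lborel"
    using set_integrable_height unfolding set_integrable_def by (rule borel_measurable_integrable)
  hence "height absolutely_integrable_on shadow"
    using set_integrable_height by (simp add: set_integrable_def integrable_completion)
  moreover have "negligible {x \<in> shadow - range psi. height x \<noteq> 0}"
    by (rule negligible_subset[OF negligible_shadow_diff_range_psi]) auto
  moreover have "negligible {x \<in> range psi - shadow. height x \<noteq> 0}"
    by (rule negligible_subset[OF negligible_empty]) (use psi_in_shadow in auto)
  ultimately show "height absolutely_integrable_on range psi"
    "integral (range psi) height = integral shadow height"
    using absolutely_integrable_spike_set_eq integral_spike_set by blast+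
qed

definition fiber_integrand :: "'a \<Rightarrow> real" where
  "fiber_integrand \<xi> = inner u (G (u + \<xi>)) * subspace_jacobian f (\<lambda>\<xi>. proj (range f) (G (u + \<xi>))) \<xi>"

lemma fiber_integrand_f: "fiber_integrand (f y) = \<bar>det (matrix (psi' y))\<bar> * height (psi y)"
  using det_psi'_nonneg by (simp add: fiber_integrand_def subspace_jacobian_psi height_def top_point_psi)

lemma inv_f_eq: "inv f \<xi> = (if \<xi> \<in> range f then coords \<xi> else (SOME y. False))"
proof (cases "\<xi> \<in> range f")
  case False
  hence "(\<lambda>y. y \<in> UNIV \<and> f y = \<xi>) = (\<lambda>y. False)" by auto
  thus ?thesis using False by (simp add: inv_into_def)
qed auto

lemma measurable_fiber_integrand: "fiber_integrand \<in> borel_measurable borel"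
proof -
  have "G \<in> borel_measurable borel"
    by (rule borel_measurable_continuous_countable_exceptions[of "{0}"]) (use continuous_on_G in auto)
  hence "(\<lambda>\<xi>. inner u (G (u + \<xi>))) \<in> borel_measurable borel"
    using measurable_compose[of "\<lambda>\<xi>. u + \<xi>" borel borel G] by measurable
  moreover have "(\<lambda>\<xi>. det (matrix (psi' (coords \<xi>)))) \<in> borel_measurable borel"
    by (intro borel_measurable_continuous_onI continuous_on_compose2[OF continuous_on_det_psi'
        continuous_on_coords]) auto
  moreover have "fiber_integrand = (\<lambda>\<xi>. if \<xi> \<in> range f
      then inner u (G (u + \<xi>)) * det (matrix (psi' (coords \<xi>)))
      else inner u (G (u + \<xi>)) * det (matrix (psi' (SOME y. False))))"
    by (auto simp: fun_eq_iff fiber_integrand_def subspace_jacobian_psi inv_f_eq)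
  ultimately show ?thesis
    using closed_range_f by (simp add: borel_closed)
qed

lemma integral_fiber_integrand:
  "(\<integral>\<xi>. fiber_integrand \<xi> \<partial>subspace_lebesgue f) = (\<integral>y. \<bar>det (matrix (psi' y))\<bar> * height (psi y) \<partial>lborel)"
  unfolding subspace_lebesgue_def
  by (simp add: integral_distr[OF measurable_f_lborel measurable_fiber_integrand] fiber_integrand_f)


lemma fiber_setting_of_well_ordered: "fiber_setting (f \<circ> of_well_ordered) K u"
proof (intro fiber_setting.intro fiber_setting_axioms.intro isometric_frame_of_well_ordered)
  show "u \<in> orthogonal_comp (range (f \<circ> of_well_ordered))"
    unfolding range_comp_of_well_ordered by (rule u_orthogonal)
qed (simp_all add: convex_body_K curved_K u_nonzero)

lemma integral_fiber_integrand_of_well_ordered: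
  "(\<integral>\<xi>. fiber_setting.fiber_integrand (f \<circ> of_well_ordered) K u \<xi> \<partial>subspace_lebesgue f) =
    (\<integral>\<xi>. fiber_integrand \<xi> \<partial>subspace_lebesgue f)"
proof -
  interpret wo: fiber_setting "f \<circ> of_well_ordered" K u by (rule fiber_setting_of_well_ordered)
  have "AE \<xi> in subspace_lebesgue f. wo.fiber_integrand \<xi> = fiber_integrand \<xi>"
    using AE_subspace_lebesgue_range
  proof eventually_elim
    case (elim \<xi>)
    then obtain y where \<xi>: "\<xi> = f y" by blast
    have "subspace_jacobian (f \<circ> of_well_ordered) (\<lambda>\<xi>. proj (range f) (G (u + \<xi>))) (f y) =
        subspace_jacobian f (\<lambda>\<xi>. proj (range f) (G (u + \<xi>))) (f y)"
      by (rule subspace_jacobian_of_well_ordered[OF _ has_derivative_psi[folded inv_proj_G_eq_psi]])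
        (simp add: proj_range)
    thus ?case
      unfolding \<xi> wo.fiber_integrand_def fiber_integrand_def range_comp_of_well_ordered by simp
  qed
  thus ?thesis
    using wo.measurable_fiber_integrand measurable_fiber_integrand
    by (intro integral_cong_AE) (simp_all add: measurable_cong_sets[OF sets_subspace_lebesgue refl])
qed

end

lemma supp_fun_fiber_body_well_ordered:
  fixes f :: "real^'n::{finite,wellorder} \<Rightarrow> 'a::euclidean_space"
  assumes "fiber_setting f K u"
  shows "supp_fun (fiber_body f K) u = (\<integral>\<xi>. fiber_setting.fiber_integrand f K u \<xi> \<partial>subspace_lebesgue f)"
proof -
  interpret fiber_setting f K u by fact
  note cov = has_absolute_integral_change_of_variables_scalar[OF has_derivative_psi inj_psi
      height_absolutely_integrable_on_range_psi]
  have "(\<lambda>y. \<bar>det (matrix (psi' y))\<bar> * height (psi y)) \<in> borel_measurable borel"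
    using measurable_compose[OF measurable_f measurable_fiber_integrand] by (simp add: fiber_integrand_f)
  note lborel = integral_lborel_eq_integral_UNIV[OF cov(1) this]
  show ?thesis
    by (simp add: supp_fun_fiber_body_eq_integral_height integral_fiber_integrand lborel cov(2)
        integral_range_psi_height)
qed

theorem mainTheorem12:
  fixes K :: "'a::euclidean_space set" and V :: "'a set"
    and f :: "real^'n \<Rightarrow> 'a" and u :: 'a
  assumes "convex_body K" and "curved K"
    and "linear f" and "\<forall>y. norm (f y) = norm y" and "range f = V"
    and "u \<in> orthogonal_comp V" and "u \<noteq> 0"
  shows "supp_fun (fiber_body f K) u =
    (\<integral>xi. inner u (grad (supp_fun K) (u + xi)) *
          subspace_jacobian f (\<lambda>\<xi>. proj V (grad (supp_fun K) (u + \<xi>))) xi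
       \<partial>subspace_lebesgue f)"
proof -
  interpret fiber_setting f K u
    using assms by (intro fiber_setting.intro isometric_frame.intro fiber_setting_axioms.intro) auto
  have "supp_fun (fiber_body f K) u = supp_fun (fiber_body (f \<circ> of_well_ordered) K) u"
    unfolding fiber_body_of_well_ordered ..
  also have "\<dots> = (\<integral>\<xi>. fiber_setting.fiber_integrand (f \<circ> of_well_ordered) K u \<xi>
      \<partial>subspace_lebesgue (f \<circ> of_well_ordered))"
    by (rule supp_fun_fiber_body_well_ordered[OF fiber_setting_of_well_ordered])
  also have "\<dots> = (\<integral>\<xi>. fiber_integrand \<xi> \<partial>subspace_lebesgue f)"
    unfolding subspace_lebesgue_of_well_ordered integral_fiber_integrand_of_well_ordered ..
  finally show ?thesis
    unfolding fiber_integrand_def assms(5) .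
qed

end
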